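(* Let $G_1$ be a $(q_1,q_2)$-semi-regular bipartite graph with bipartition $V_1,V_2$, $|V_1|=n_1\le n_2=|V_2|$, $\nu_1=n_1+n_2$, and let $G_2$ be a $(q_3,q_4)$-semi-regular bipartite graph with bipartition $V_3,V_4$, $|V_3|=n_3\le n_4=|V_4|$, $\nu_2=n_3+n_4$. Write $spec(G_1)=\{\pm\lambda_1,\dots,\pm\lambda_{k_1},0^{(\nu_1-2k_1)}\}$ and $spec(G_2)=\{\pm\mu_1,\dots,\pm\mu_{k_2},0^{(\nu_2-2k_2)}\}$ where $k_1,k_2$ are the numbers of positive eigenvalues, $\sqrt{q_1q_2}=\lambda_1\ge\dots\ge\lambda_{k_1}>0$, $\sqrt{q_3q_4}=\mu_1\ge\dots\ge\mu_{k_2}>0$. Then the number of spanning trees of $G=G_1\vee G_2$ is $$\tau(G)=(q_1+q_2+\nu_2)(q_3+q_4+\nu_1)(q_1+\nu_2)^{n_1-k_1}(q_2+\nu_2)^{n_2-k_1}(q_3+\nu_1)^{n_3-k_2}(q_4+\nu_1)^{n_4-k_2}\prod_{i=2}^{k_1}\big[(q_1+\nu_2)(q_2+\nu_2)-\lambda_i^2\big]\prod_{j=2}^{k_2}\big[(q_3+\nu_1)(q_4+\nu_1)-\mu_j^2\big].$$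
   Context: A bipartite graph with bipartition $(V_1,V_2)$ is $(q_1,q_2)$-semi-regular if every vertex of $V_1$ has degree $q_1$ and every vertex of $V_2$ has degree $q_2$ ($q_1,q_2\ge1$). The join $G_1\vee G_2$ has vertex set $V(G_1)\sqcup V(G_2)$ and edge set $E(G_1)\cup E(G_2)\cup\{uv:u\in V(G_1),v\in V(G_2)\}$. $spec$ denotes the multiset of adjacency eigenvalues (exponents in parentheses denote multiplicities); $\tau(G)$ is the number of spanning trees of $G$. *)

theory Defs
  imports "HOL-Analysis.Analysis" "HOL-Computational_Algebra.Polynomial"
begin

text \<open>Simple graphs on a finite vertex type: the vertex set is UNIV, the edges are given
by a symmetric irreflexive relation E.\<close>

definition simple_graph :: "('a \<Rightarrow> 'a \<Rightarrow> bool) \<Rightarrow> bool" where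
  "simple_graph E \<longleftrightarrow> (\<forall>u v. E u v \<longrightarrow> E v u) \<and> (\<forall>u. \<not> E u u)"

definition degree :: "('a::finite \<Rightarrow> 'a \<Rightarrow> bool) \<Rightarrow> 'a \<Rightarrow> nat" where
  "degree E v = card {u. E v u}"

definition semiregular_bipartite ::
  "('a::finite \<Rightarrow> 'a \<Rightarrow> bool) \<Rightarrow> 'a set \<Rightarrow> 'a set \<Rightarrow> nat \<Rightarrow> nat \<Rightarrow> bool" where
  "semiregular_bipartite E V1 V2 q1 q2 \<longleftrightarrow>
     simple_graph E \<and> V1 \<union> V2 = UNIV \<and> V1 \<inter> V2 = {} \<and>
     (\<forall>u v. E u v \<longrightarrow> (u \<in> V1 \<and> v \<in> V2) \<or> (u \<in> V2 \<and> v \<in> V1)) \<and>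
     q1 \<ge> 1 \<and> q2 \<ge> 1 \<and>
     (\<forall>v\<in>V1. degree E v = q1) \<and> (\<forall>v\<in>V2. degree E v = q2)"

definition join :: "('a \<Rightarrow> 'a \<Rightarrow> bool) \<Rightarrow> ('b \<Rightarrow> 'b \<Rightarrow> bool) \<Rightarrow> ('a + 'b) \<Rightarrow> ('a + 'b) \<Rightarrow> bool" where
  "join E1 E2 x y = (case (x, y) of
      (Inl a, Inl b) \<Rightarrow> E1 a b
    | (Inr a, Inr b) \<Rightarrow> E2 a b
    | _ \<Rightarrow> True)"

definition adjacency :: "('a::finite \<Rightarrow> 'a \<Rightarrow> bool) \<Rightarrow> real^'a^'a" where
  "adjacency E = (\<chi> i j. if E i j then 1 else 0)"

definition charpoly :: "real^'n^'n \<Rightarrow> real poly" where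
  "charpoly A = det (\<chi> i j. (if i = j then [:0, 1:] else 0) - [:A $ i $ j:])"

definition spec :: "('a::finite \<Rightarrow> 'a \<Rightarrow> bool) \<Rightarrow> real multiset" where
  "spec E = proots (charpoly (adjacency E))"

definition edges :: "('a \<Rightarrow> 'a \<Rightarrow> bool) \<Rightarrow> 'a set set" where
  "edges E = {{u, v} | u v. E u v}"

definition connected_edges :: "'a set set \<Rightarrow> bool" where
  "connected_edges T \<longleftrightarrow> (\<forall>u v. (u, v) \<in> {(x, y). {x, y} \<in> T}\<^sup>*)"

definition has_cycle :: "'a set set \<Rightarrow> bool" where
  "has_cycle T \<longleftrightarrow> (\<exists>vs. length vs \<ge> 3 \<and> distinct vs \<and>
      (\<forall>i < length vs. {vs ! i, vs ! ((i + 1) mod length vs)} \<in> T))"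

definition spanning_tree :: "('a \<Rightarrow> 'a \<Rightarrow> bool) \<Rightarrow> 'a set set \<Rightarrow> bool" where
  "spanning_tree E T \<longleftrightarrow> T \<subseteq> edges E \<and> connected_edges T \<and> \<not> has_cycle T"

definition num_spanning_trees :: "('a \<Rightarrow> 'a \<Rightarrow> bool) \<Rightarrow> nat" where
  "num_spanning_trees E = card {T. spanning_tree E T}"

end

theory Submission
  imports Defs "HOL-Library.Transitive_Closure_Table"
begin

text \<open>The matrix-tree theorem is used in the form \<open>det (L + J) = n\<^sup>2 \<tau>(G)\<close>, with \<open>J\<close> the
  all-ones matrix. For the join \<open>G\<^sub>1 \<or> G\<^sub>2\<close> the matrix \<open>L + J\<close> is block diagonal: the cross
  edges raise every degree in \<open>G\<^sub>1\<close> by \<open>\<nu>\<^sub>2\<close> (and vice versa), and their \<open>-1\<close> entries are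
  cancelled by \<open>J\<close>. Each block \<open>K + J\<close> has \<open>K = L(G\<^sub>i) + c I\<close> with all row sums \<open>c\<close>, so
  \<open>c det (K + J) = (c + n) det K\<close>. For a semiregular bipartite graph, \<open>K\<close> is
  \<open>diag (\<alpha> on V\<^sub>1, \<beta> on V\<^sub>2) - A\<close>, and rescaling by diagonal matrices relates its
  determinant to the characteristic polynomial of \<open>A\<close>, giving
  \<open>\<alpha>\<^bsup>n\<^sub>1-k\<^esup> \<beta>\<^bsup>n\<^sub>2-k\<^esup> \<Prod>(\<alpha>\<beta> - \<lambda>\<^sub>i\<^sup>2)\<close>. Since \<open>\<lambda>\<^sub>1\<^sup>2 = q\<^sub>1q\<^sub>2\<close>, the factor for \<open>i = 1\<close>
  is \<open>c (q\<^sub>1 + q\<^sub>2 + c)\<close>. With \<open>c = \<nu>\<^sub>2\<close> (resp. \<open>\<nu>\<^sub>1\<close>) both blocks contribute a factor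
  \<open>n + c = \<nu>\<^sub>1 + \<nu>\<^sub>2\<close>, which cancels the \<open>n\<^sup>2\<close> of the matrix-tree theorem.\<close>

section \<open>Determinants\<close>

lemma det_lowerdiagonal_rank:
  fixes A :: "'a::comm_ring_1^'n::finite^'n" and h :: "'n \<Rightarrow> nat"
  assumes "\<And>i j. A$i$j \<noteq> 0 \<Longrightarrow> i = j \<or> h j < h i"
  shows "det A = (\<Prod>i\<in>UNIV. A$i$i)"
proof -
  let ?P = "{p. p permutes (UNIV::'n set)}"
  let ?t = "\<lambda>p. of_int (sign p) * (\<Prod>i\<in>UNIV. A $ i $ p i)"
  have "?t p = 0" if p: "p \<in> ?P - {id}" for p
  proof (rule ccontr)
    assume "?t p \<noteq> 0"
    then have nz: "\<forall>i. A$i$p i \<noteq> 0" by (metis finite UNIV_I mult_zero_right prod_zero)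
    then have le: "\<forall>i. h (p i) \<le> h i" using assms by (metis order.refl less_imp_le)
    from p obtain i0 where "p i0 \<noteq> i0" by (auto simp: fun_eq_iff)
    then have lt: "h (p i0) < h i0" using nz assms by metis
    have "sum h UNIV = sum (h \<circ> p) UNIV" using p by (intro sum.permute) auto
    also have "\<dots> < sum h UNIV" using le lt by (intro sum_strict_mono_ex1) auto
    finally show False by simp
  qed
  then have "det A = ?t id"
    unfolding det_def by (subst sum.remove[of _ id]) (auto simp: permutes_id intro: sum.neutral)
  then show ?thesis by simp
qed

lemma det_eq_0_if_kernel:
  fixes A :: "'a::field^'n::finite^'n"
  assumes "A *v w = 0" "w \<noteq> 0"
  shows "det A = 0"
  using assms invertible_det_nz invertible_left_inverse matrix_left_invertible_ker by metis

text \<open>Add all rows to row \<open>r\<close> and factor out \<open>c\<close>; then subtract \<open>t\<close> times the new row \<open>r\<close>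
  from every other row. Note that \<open>1 :: 'a^'n\<close> is the all-ones vector.\<close>

lemma det_sum_rows_eq_ones:
  fixes A :: "'a::field^'n::finite^'n"
  assumes sum_rows: "(\<Sum>j\<in>UNIV. row j A) = c *s 1"
  shows "det A = c * det (\<chi> i. if i = r then 1 else row i A - t *s 1)"
proof -
  let ?M = "\<chi> i. if i = r then 1 else row i A - t *s 1"
  let ?P = "\<chi> i j. (if j = i then 1 else 0) + (if i \<noteq> r \<and> j = r then t else 0)"
  have "det A = det (\<chi> k. if k = r then row r A + (\<Sum>j\<in>UNIV-{r}. row j A) else row k A)"
    by (rule det_row_span[symmetric]) (intro vec.span_sum vec.span_base, auto)
  also have "row r A + (\<Sum>j\<in>UNIV-{r}. row j A) = c *s 1"
    using sum_rows by (simp add: sum.remove[of UNIV r])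
  also have "det (\<chi> k. if k = r then c *s 1 else row k A) = c * det (\<chi> k. if k = r then 1 else row k A)"
    by (rule det_row_mul)
  also have "(\<chi> k. if k = r then 1 else row k A) = ?P ** ?M"
  proof -
    have "(\<Sum>k\<in>UNIV. ?P$i$k *s ?M$k) = (if i = r then 1 else row i A)" for i
    proof -
      have "(\<Sum>k\<in>UNIV. ?P$i$k *s ?M$k) =
          (\<Sum>k\<in>UNIV. (if k = i then ?M$k else 0) + (if i \<noteq> r \<and> k = r then t *s ?M$k else 0))"
        by (intro sum.cong) (auto simp: vector_sadd_rdistrib)
      then show ?thesis by (simp add: sum.distrib)
    qed
    then show ?thesis by (simp add: matrix_mul_sum_alt vec_eq_iff)
  qed
  also have "det (?P ** ?M) = det ?P * det ?M" by (rule det_mul)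
  also have "det ?P = 1"
    by (subst det_lowerdiagonal_rank[where h = "\<lambda>i. if i = r then 0 else 1"]) (auto split: if_splits)
  finally show ?thesis by simp
qed

definition ones_mat :: "'a::one^'n^'n" where
  "ones_mat = (\<chi> i j. 1)"

lemma det_add_ones_mat:
  fixes K :: "'a::field^'n::finite^'n"
  assumes "(\<Sum>j\<in>UNIV. row j K) = c *s 1"
  shows "det (K + ones_mat) = (c + of_nat CARD('n)) * det (\<chi> i. if i = r then 1 else row i K)"
proof -
  have "(\<Sum>j\<in>UNIV. row j (K + ones_mat)) = (c + of_nat CARD('n)) *s 1"
    using assms by (simp add: vec_eq_iff sum_component row_def ones_mat_def sum.distrib algebra_simps)
  then have "det (K + ones_mat) = (c + of_nat CARD('n)) * det (\<chi> i. if i = r then 1 else row i (K + ones_mat) - 1 *s 1)"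
    by (rule det_sum_rows_eq_ones)
  also have "(\<chi> i. if i = r then 1 else row i (K + ones_mat) - 1 *s 1) = (\<chi> i. if i = r then 1 else row i K)"
    by (simp add: vec_eq_iff row_def ones_mat_def)
  finally show ?thesis .
qed

lemma det_add_ones_mat_scaled:
  fixes K :: "'a::field^'n::finite^'n"
  assumes "(\<Sum>j\<in>UNIV. row j K) = c *s 1"
  shows "c * det (K + ones_mat) = (c + of_nat CARD('n)) * det K"
proof -
  fix r :: 'n
  have "det K = c * det (\<chi> i. if i = r then 1 else row i K - 0 *s 1)"
    using assms by (rule det_sum_rows_eq_ones)
  also have "(\<chi> i. if i = r then 1 else row i K - 0 *s 1) = (\<chi> i. if i = r then 1 else row i K)"
    by (simp add: vec_eq_iff)
  finally show ?thesis using det_add_ones_mat[OF assms, of r] by simp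
qed

section \<open>The matrix-tree theorem\<close>

definition laplacian :: "('n::finite \<Rightarrow> 'n \<Rightarrow> bool) \<Rightarrow> real^'n^'n" where
  "laplacian E = (\<chi> i j. (if i = j then real (degree E i) else 0) - (if E i j then 1 else 0))"

lemma laplacian_row_sum: "(\<Sum>j\<in>UNIV. laplacian E $ i $ j) = 0"
proof -
  have "(\<Sum>j\<in>UNIV. laplacian E $ i $ j) = real (degree E i) - real (card {j. E i j})"
    by (simp add: laplacian_def sum_subtractf sum.If_cases)
  then show ?thesis by (simp add: degree_def)
qed

lemma laplacian_sym: "simple_graph E \<Longrightarrow> laplacian E $ i $ j = laplacian E $ j $ i"
  unfolding laplacian_def simple_graph_def by auto

lemma sum_rows_laplacian_add_mat:
  assumes "simple_graph E"
  shows "(\<Sum>j\<in>UNIV. row j (laplacian E + mat c)) = c *s 1"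
proof -
  have "(\<Sum>j\<in>UNIV. laplacian E $ j $ k + mat c $ j $ k) = c" for k
    using laplacian_row_sum[of E k] laplacian_sym[OF assms, of _ k]
    by (simp add: sum.distrib mat_def)
  then show ?thesis by (simp add: vec_eq_iff sum_component row_def)
qed

lemma row_laplacian_eq_sum_axis:
  "row i (laplacian E) = (\<Sum>y\<in>UNIV. if E i y then axis i 1 - axis y 1 else 0)"
proof -
  have "(\<Sum>y\<in>UNIV. if E i y then axis i 1 - axis y 1 else 0) $ j = laplacian E $ i $ j" for j
  proof -
    have "(\<Sum>y\<in>UNIV. if E i y then axis i 1 - axis y 1 else 0) $ j =
        (\<Sum>y\<in>{y. E i y}. (if j = i then 1 else 0) - (if j = y then 1 else 0 :: real))"
      by (simp add: sum_component if_distrib[of "\<lambda>v. v $ j"] sum.If_cases Int_def axis_def cong: if_cong)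
    also have "\<dots> = laplacian E $ i $ j"
      by (auto simp: sum_subtractf sum.If_cases Int_def laplacian_def degree_def)
    finally show ?thesis .
  qed
  then show ?thesis by (simp add: vec_eq_iff row_def)
qed

text \<open>Deleting row and column \<open>r\<close> of the Laplacian is encoded by replacing row \<open>r\<close> with
  the unit vector at \<open>r\<close>.\<close>

lemma det_laplacian_replace_row_ones:
  fixes E :: "'n::finite \<Rightarrow> 'n \<Rightarrow> bool"
  shows "det (\<chi> i. if i = r then 1 else row i (laplacian E)) =
    real CARD('n) * det (\<chi> i. if i = r then axis r 1 else row i (laplacian E))"
proof -
  let ?D = "\<lambda>v. det (\<chi> i. if i = r then v else row i (laplacian E))"
  have same: "?D (axis y 1) = ?D (axis r 1)" for y
  proof -
    have "?D (axis y 1 + (- 1) *s axis r 1) = ?D (axis y 1) - ?D (axis r 1)"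
      by (simp add: det_row_add det_row_mul)
    moreover have "?D (axis y 1 + (- 1) *s axis r 1) = 0"
    proof (rule det_eq_0_if_kernel)
      show "(1 :: real^'n) \<noteq> 0" by (simp add: vec_eq_iff)
      show "(\<chi> i. if i = r then axis y 1 + (- 1) *s axis r 1 else row i (laplacian E)) *v 1 = 0"
        using laplacian_row_sum[of E]
        by (simp add: vec_eq_iff matrix_vector_mult_def axis_def row_def sum.distrib sum_subtractf)
    qed
    ultimately show ?thesis by simp
  qed
  have ones: "(\<Sum>y\<in>UNIV. axis y 1) = (1 :: real^'n)"
    by (simp add: vec_eq_iff sum_component axis_def)
  have "?D 1 = (\<Sum>y\<in>UNIV. ?D (axis y 1))"
    unfolding ones[symmetric] by (rule det_linear_row_sum) simp
  also have "\<dots> = (\<Sum>y\<in>(UNIV :: 'n set). ?D (axis r 1))" by (intro sum.cong refl same)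
  finally show ?thesis by simp
qed

subsection \<open>Parent maps\<close>

text \<open>A spanning tree rooted at \<open>r\<close> is the same as a map sending every other vertex to a
  neighbour (its parent) such that iterating it from any vertex reaches \<open>r\<close>.\<close>

definition reaches_root :: "('n \<Rightarrow> 'n) \<Rightarrow> 'n \<Rightarrow> bool" where
  "reaches_root f r \<longleftrightarrow> (\<forall>x. \<exists>n. (f ^^ n) x = r)"

definition depth :: "('n \<Rightarrow> 'n) \<Rightarrow> 'n \<Rightarrow> 'n \<Rightarrow> nat" where
  "depth f r x = (LEAST n. (f ^^ n) x = r)"

definition parent_maps :: "('n \<Rightarrow> 'n \<Rightarrow> bool) \<Rightarrow> 'n \<Rightarrow> ('n \<Rightarrow> 'n) set" where
  "parent_maps E r = {f. f r = r \<and> (\<forall>x. x \<noteq> r \<longrightarrow> E x (f x)) \<and> reaches_root f r}"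

lemma depth_parent:
  assumes "reaches_root f r" "x \<noteq> r"
  shows "depth f r (f x) + 1 = depth f r x"
proof -
  have reach: "(f ^^ depth f r y) y = r" for y
  proof -
    obtain n where "(f ^^ n) y = r" using assms(1) unfolding reaches_root_def by blast
    then show ?thesis unfolding depth_def by (rule LeastI)
  qed
  have "depth f r x \<noteq> 0" using reach[of x] assms(2) by (metis funpow_0)
  then obtain d where d: "depth f r x = Suc d" by (cases "depth f r x") auto
  have "(f ^^ d) (f x) = r" using reach[of x] d by (simp add: funpow_Suc_right del: funpow.simps)
  then have "depth f r (f x) \<le> d" unfolding depth_def by (rule Least_le)
  moreover have "(f ^^ Suc (depth f r (f x))) x = r"
    using reach[of "f x"] by (simp add: funpow_Suc_right del: funpow.simps)
  then have "depth f r x \<le> Suc (depth f r (f x))" unfolding depth_def by (rule Least_le)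
  ultimately show ?thesis using d by simp
qed

definition parent_matrix :: "'n::finite \<Rightarrow> ('n \<Rightarrow> 'n) \<Rightarrow> real^'n^'n" where
  "parent_matrix r f = (\<chi> i. if i = r then axis r 1 else axis i 1 - axis (f i) 1)"

lemma det_parent_matrix_reaches_root:
  assumes "reaches_root f r" "\<And>x. x \<noteq> r \<Longrightarrow> f x \<noteq> x"
  shows "det (parent_matrix r f) = 1"
proof -
  have "det (parent_matrix r f) = (\<Prod>i\<in>UNIV. parent_matrix r f $ i $ i)"
  proof (rule det_lowerdiagonal_rank[where h = "depth f r"])
    fix i j assume "parent_matrix r f $ i $ j \<noteq> 0"
    then have "i = j \<or> (i \<noteq> r \<and> j = f i)"
      by (auto simp: parent_matrix_def axis_def split: if_splits)
    then show "i = j \<or> depth f r j < depth f r i" using depth_parent[OF assms(1)] by force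
  qed
  also have "\<dots> = 1"
    using assms(2) by (intro prod.neutral) (fastforce simp: parent_matrix_def axis_def)
  finally show ?thesis .
qed

text \<open>If some vertex never reaches \<open>r\<close>, the indicator of all such vertices is in the kernel.\<close>

lemma det_parent_matrix_not_reaches_root:
  fixes f :: "'n::finite \<Rightarrow> 'n"
  assumes "\<not> reaches_root f r"
  shows "det (parent_matrix r f) = 0"
proof -
  let ?B = "\<lambda>y. \<forall>n. (f ^^ n) y \<noteq> r"
  let ?w = "(\<chi> y. if ?B y then 1 else 0) :: real^'n"
  obtain x where x: "?B x" using assms unfolding reaches_root_def by blast
  have B_parent: "?B (f i) \<longleftrightarrow> ?B i" if "i \<noteq> r" for i
  proof
    assume "?B (f i)"
    show "?B i"
    proof
      fix n show "(f ^^ n) i \<noteq> r"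
        using \<open>?B (f i)\<close> that by (cases n) (auto simp: funpow_Suc_right simp del: funpow.simps)
    qed
  qed (metis funpow_Suc_right o_apply)
  have "\<not> ?B r" by (metis funpow_0)
  then have "parent_matrix r f *v ?w = 0"
    using B_parent by (auto simp: vec_eq_iff parent_matrix_def matrix_vector_mult_def axis_def
        left_diff_distrib sum_subtractf if_distrib[of "\<lambda>v. v * _"] sum.If_cases cong: if_cong)
  moreover have "?w \<noteq> 0" using x by (auto simp: vec_eq_iff intro!: exI[of _ x])
  ultimately show ?thesis by (rule det_eq_0_if_kernel)
qed

text \<open>Expand each row \<open>i \<noteq> r\<close> as a sum over the neighbours of \<open>i\<close>: choosing one summand per
  row is a map \<open>f\<close>, and the resulting term is \<open>det (parent_matrix r f)\<close>.\<close>

lemma det_laplacian_replace_row_axis: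
  fixes E :: "'n::finite \<Rightarrow> 'n \<Rightarrow> bool"
  assumes E: "simple_graph E"
  shows "det (\<chi> i. if i = r then axis r 1 else row i (laplacian E)) = real (card (parent_maps E r))"
proof -
  define a where "a i y = (if i = r then (if y = r then axis r 1 else 0)
    else (if E i y then axis i 1 - axis y 1 else 0 :: real^'n))" for i y
  have "(\<chi> i. if i = r then axis r 1 else row i (laplacian E)) = (\<chi> i. \<Sum>y\<in>UNIV. a i y)"
    by (intro arg_cong[where f = vec_lambda] ext) (simp add: a_def row_laplacian_eq_sum_axis)
  then have "det (\<chi> i. if i = r then axis r 1 else row i (laplacian E)) =
      (\<Sum>f\<in>{f. \<forall>i. f i \<in> UNIV}. det (\<chi> i. a i (f i)))"
    by (simp add: det_linear_rows_sum)
  also have "\<dots> = (\<Sum>f\<in>UNIV. if f \<in> parent_maps E r then 1 else 0)"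
  proof (rule sum.cong)
    fix f :: "'n \<Rightarrow> 'n"
    show "det (\<chi> i. a i (f i)) = (if f \<in> parent_maps E r then 1 else 0)"
    proof (cases "f r = r \<and> (\<forall>x. x \<noteq> r \<longrightarrow> E x (f x))")
      case False
      then have "\<exists>x. a x (f x) = 0" by (auto simp: a_def)
      then obtain x where "a x (f x) = 0" ..
      then have "det (\<chi> i. a i (f i)) = 0" by (intro det_zero_row(1)[of x]) (simp add: row_def vec_eq_iff)
      then show ?thesis using False by (auto simp: parent_maps_def)
    next
      case True
      then have "(\<chi> i. a i (f i)) = parent_matrix r f"
        by (auto simp: a_def parent_matrix_def vec_eq_iff)
      moreover have "\<And>x. x \<noteq> r \<Longrightarrow> f x \<noteq> x" using True E by (metis simple_graph_def)
      ultimately show ?thesis using True det_parent_matrix_reaches_root det_parent_matrix_not_reaches_root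
        by (auto simp: parent_maps_def)
    qed
  qed simp
  also have "\<dots> = real (card (parent_maps E r))" by (simp add: sum.If_cases)
  finally show ?thesis .
qed

definition parent_edges :: "'n \<Rightarrow> ('n \<Rightarrow> 'n) \<Rightarrow> 'n set set" where
  "parent_edges r f = {{x, f x} | x. x \<noteq> r}"

lemma parent_edges_subset_edges: "f \<in> parent_maps E r \<Longrightarrow> parent_edges r f \<subseteq> edges E"
  unfolding parent_edges_def parent_maps_def edges_def by blast

lemma connected_parent_edges:
  assumes "f \<in> parent_maps E r"
  shows "connected_edges (parent_edges r f)"
proof -
  let ?R = "{(x, y). {x, y} \<in> parent_edges r f}"
  have to_root: "(x, r) \<in> ?R\<^sup>*" if "(f ^^ n) x = r" for n x
    using that
  proof (induction n arbitrary: x)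
    case (Suc n)
    then have "(f x, r) \<in> ?R\<^sup>*" by (simp add: funpow_Suc_right del: funpow.simps)
    moreover have "x \<noteq> r \<Longrightarrow> (x, f x) \<in> ?R" by (auto simp: parent_edges_def)
    ultimately show ?case by (cases "x = r") (auto intro: converse_rtrancl_into_rtrancl)
  qed simp
  have "(x, r) \<in> ?R\<^sup>*" for x
    using assms to_root unfolding parent_maps_def reaches_root_def by blast
  moreover have "?R\<inverse> = ?R" by (auto simp: insert_commute)
  then have "(r, x) \<in> ?R\<^sup>*" if "(x, r) \<in> ?R\<^sup>*" for x
    using that by (metis rtrancl_converseI)
  ultimately show ?thesis unfolding connected_edges_def by (meson rtrancl_trans)
qed

lemma parent_edge_lower_end:
  assumes "f \<in> parent_maps E r" "{v, z} \<in> parent_edges r f" "depth f r z \<le> depth f r v"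
  shows "z = f v"
proof -
  from assms(2) obtain x where x: "x \<noteq> r" "{v, z} = {x, f x}" by (auto simp: parent_edges_def)
  have "depth f r (f x) + 1 = depth f r x"
    using assms(1) x(1) by (intro depth_parent) (auto simp: parent_maps_def)
  then show ?thesis using x assms(3) by (auto simp: doubleton_eq_iff)
qed

lemma cycle_two_neighbours:
  assumes len: "length vs \<ge> 3" and "distinct vs"
    and cyc: "\<forall>i < length vs. {vs ! i, vs ! ((i + 1) mod length vs)} \<in> T"
    and "v \<in> set vs"
  shows "\<exists>u w. u \<in> set vs \<and> w \<in> set vs \<and> u \<noteq> w \<and> {v, u} \<in> T \<and> {v, w} \<in> T"
proof -
  let ?m = "length vs"
  obtain i where i: "i < ?m" "vs ! i = v" using assms(4) by (auto simp: in_set_conv_nth)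
  define succ where "succ = (if Suc i = ?m then 0 else Suc i)"
  define pred where "pred = (if i = 0 then ?m - 1 else i - 1)"
  have "succ < ?m" "pred < ?m" "succ \<noteq> pred" using i(1) len by (auto simp: succ_def pred_def)
  moreover have "(i + 1) mod ?m = succ" "(pred + 1) mod ?m = i"
    using i(1) by (auto simp: succ_def pred_def)
  then have "{v, vs ! succ} \<in> T" "{v, vs ! pred} \<in> T"
    using cyc i \<open>pred < ?m\<close> by (metis insert_commute)+
  ultimately show ?thesis using \<open>distinct vs\<close> by (metis nth_eq_iff_index_eq nth_mem)
qed

text \<open>Every edge of a cycle through its deepest vertex would have to lead to the parent.\<close>

lemma parent_edges_acyclic:
  assumes f: "f \<in> parent_maps E r"
  shows "\<not> has_cycle (parent_edges r f)"
proof
  assume "has_cycle (parent_edges r f)"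
  then obtain vs where vs: "length vs \<ge> 3" "distinct vs"
    "\<forall>i < length vs. {vs ! i, vs ! ((i + 1) mod length vs)} \<in> parent_edges r f"
    unfolding has_cycle_def by blast
  let ?d = "depth f r"
  have "Max (?d ` set vs) \<in> ?d ` set vs" using vs(1) by (intro Max_in) auto
  then obtain v where v: "v \<in> set vs" "?d v = Max (?d ` set vs)" by (metis imageE)
  then obtain u w where "u \<in> set vs" "w \<in> set vs" "u \<noteq> w"
    "{v, u} \<in> parent_edges r f" "{v, w} \<in> parent_edges r f"
    using cycle_two_neighbours[OF vs] by blast
  moreover have "?d u \<le> ?d v" "?d w \<le> ?d v" using v calculation by simp_all
  ultimately show False using parent_edge_lower_end[OF f] by metis
qed

lemma parent_edges_spanning_tree: "f \<in> parent_maps E r \<Longrightarrow> spanning_tree E (parent_edges r f)"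
  by (simp add: spanning_tree_def parent_edges_subset_edges connected_parent_edges parent_edges_acyclic)

lemma inj_on_parent_edges: "inj_on (parent_edges r) (parent_maps E r)"
proof (rule inj_onI, rule ccontr)
  fix f g assume f: "f \<in> parent_maps E r" and g: "g \<in> parent_maps E r"
    and eq: "parent_edges r f = parent_edges r g" and "f \<noteq> g"
  then obtain x0 where "f x0 \<noteq> g x0" by auto
  then obtain x where x: "f x \<noteq> g x" and xmin: "\<And>y. f y \<noteq> g y \<Longrightarrow> depth g r x \<le> depth g r y"
    using ex_has_least_nat[of "\<lambda>y. f y \<noteq> g y" x0 "depth g r"] by blast
  have rg: "reaches_root g r" using g by (simp add: parent_maps_def)
  have xr: "x \<noteq> r" using x f g by (auto simp: parent_maps_def)
  have "{x, g x} \<in> parent_edges r f" using eq xr by (auto simp: parent_edges_def)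
  then obtain y where y: "y \<noteq> r" "{x, g x} = {y, f y}" by (auto simp: parent_edges_def)
  then have gy: "y = g x" "f y = x" using x by (auto simp: doubleton_eq_iff)
  have d1: "depth g r (g x) + 1 = depth g r x" by (rule depth_parent[OF rg xr])
  have "f (g x) \<noteq> g (g x)"
  proof
    assume "f (g x) = g (g x)"
    then have "g (g x) = x" using gy by simp
    moreover have "depth g r (g (g x)) + 1 = depth g r (g x)" using depth_parent[OF rg] y(1) gy by simp
    ultimately show False using d1 by simp
  qed
  then have "depth g r x \<le> depth g r (g x)" by (rule xmin)
  then show False using d1 by simp
qed

lemma has_cycle_if_path:
  assumes T: "T' \<subseteq> T" and e: "{a, b} \<in> T" "{a, b} \<notin> T'" and ab: "a \<noteq> b"
    and path: "(a, b) \<in> {(x, y). {x, y} \<in> T'}\<^sup>*"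
  shows "has_cycle T"
proof -
  let ?P = "\<lambda>x y. {x, y} \<in> T'"
  have "?P\<^sup>*\<^sup>* a b" using path by (simp add: rtranclp_rtrancl_eq[symmetric])
  then obtain xs where "rtrancl_path ?P a xs b" by (auto simp: rtranclp_eq_rtrancl_path)
  then obtain ys where p: "rtrancl_path ?P a ys b" and d: "distinct (a # ys)"
    by (rule rtrancl_path_distinct)
  have l2: "length ys \<ge> 2"
  proof (cases ys)
    case Nil then show ?thesis using p ab by (auto elim: rtrancl_path.cases)
  next
    case (Cons c zs)
    show ?thesis
    proof (cases zs)
      case Nil
      then have "?P a c" "c = b" using p Cons by (auto elim: rtrancl_path.cases)
      then show ?thesis using e by simp
    qed (simp add: Cons)
  qed
  let ?vs = "a # ys"
  have "{?vs ! i, ?vs ! ((i + 1) mod length ?vs)} \<in> T" if i: "i < length ?vs" for i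
  proof (cases "i < length ys")
    case True
    then have "?P (?vs ! i) (ys ! i)" by (rule rtrancl_path_nth[OF p])
    then show ?thesis using T True by auto
  next
    case False
    then have "i = length ys" using i by simp
    moreover have "last ys = b" using l2 by (intro rtrancl_path_last[OF p]) auto
    ultimately have "?vs ! i = b" "(i + 1) mod length ?vs = 0"
      using l2 by (auto simp: last_conv_nth nth_Cons')
    then show ?thesis using e by (simp add: insert_commute)
  qed
  moreover have "length ?vs \<ge> 3" using l2 by simp
  ultimately show ?thesis unfolding has_cycle_def using d by blast
qed

text \<open>Every vertex other than \<open>r\<close> points to a neighbour closer to \<open>r\<close>.\<close>

lemma connected_edges_ex_parent_map:
  assumes "connected_edges T"
  shows "\<exists>f. f r = r \<and> (\<forall>x. x \<noteq> r \<longrightarrow> {x, f x} \<in> T) \<and> reaches_root f r"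
proof -
  let ?R = "{(x, y). {x, y} \<in> T}"
  define dist where "dist x = (LEAST n. (x, r) \<in> ?R ^^ n)" for x
  have dist: "(x, r) \<in> ?R ^^ dist x" for x
  proof -
    have "(x, r) \<in> ?R\<^sup>*" using assms by (simp add: connected_edges_def)
    then obtain n where "(x, r) \<in> ?R ^^ n" using rtrancl_power by blast
    then show ?thesis unfolding dist_def by (rule LeastI)
  qed
  have closer: "\<exists>y. (x, y) \<in> ?R \<and> dist y < dist x" if "x \<noteq> r" for x
  proof -
    have "dist x \<noteq> 0" using dist[of x] that by (metis pair_in_Id_conv relpow.simps(1))
    then obtain k where k: "dist x = Suc k" by (cases "dist x") auto
    then obtain y where y: "(x, y) \<in> ?R" "(y, r) \<in> ?R ^^ k" using dist[of x] by (metis relpow_Suc_D2)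
    have "dist y \<le> k" unfolding dist_def using y(2) by (rule Least_le)
    then show ?thesis using y k by auto
  qed
  define f where "f x = (if x = r then r else SOME y. (x, y) \<in> ?R \<and> dist y < dist x)" for x
  have fx: "(x, f x) \<in> ?R \<and> dist (f x) < dist x" if "x \<noteq> r" for x
    using someI_ex[OF closer[OF that]] that by (simp add: f_def)
  have reach: "\<exists>n. (f ^^ n) x = r" for x
  proof (induction x rule: measure_induct_rule[of dist])
    case (less x)
    show ?case
    proof (cases "x = r")
      case False
      then obtain n where "(f ^^ n) (f x) = r" using less fx by blast
      then have "(f ^^ Suc n) x = r" by (simp add: funpow_Suc_right del: funpow.simps)
      then show ?thesis by blast
    qed (auto intro: exI[of _ 0])
  qed
  then show ?thesis using fx by (intro exI[of _ f]) (simp add: f_def reaches_root_def)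
qed

lemma spanning_tree_eq_parent_edges:
  assumes E: "simple_graph E" and T: "spanning_tree E T"
  shows "\<exists>f\<in>parent_maps E r. parent_edges r f = T"
proof -
  have "connected_edges T" using T by (simp add: spanning_tree_def)
  then obtain f where f: "f r = r" "\<And>x. x \<noteq> r \<Longrightarrow> {x, f x} \<in> T" "reaches_root f r"
    using connected_edges_ex_parent_map[where r = r] by blast
  have "E x (f x)" if "x \<noteq> r" for x
  proof -
    have "{x, f x} \<in> edges E" using f(2)[OF that] T by (auto simp: spanning_tree_def)
    then show ?thesis using E by (auto simp: edges_def doubleton_eq_iff simple_graph_def)
  qed
  then have f_parent: "f \<in> parent_maps E r" using f by (simp add: parent_maps_def)
  have sub: "parent_edges r f \<subseteq> T" using f(2) by (auto simp: parent_edges_def)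
  have "T \<subseteq> parent_edges r f"
  proof
    fix e assume eT: "e \<in> T"
    then obtain a b where ab: "e = {a, b}" "E a b" using T by (auto simp: spanning_tree_def edges_def)
    have "a \<noteq> b" using ab E by (auto simp: simple_graph_def)
    moreover have "(a, b) \<in> {(x, y). {x, y} \<in> parent_edges r f}\<^sup>*"
      using connected_parent_edges[OF f_parent] by (simp add: connected_edges_def)
    moreover have "\<not> has_cycle T" using T by (simp add: spanning_tree_def)
    ultimately show "e \<in> parent_edges r f" using has_cycle_if_path[OF sub] eT ab by blast
  qed
  with sub f_parent show ?thesis by blast
qed

lemma card_parent_maps:
  fixes E :: "'n::finite \<Rightarrow> 'n \<Rightarrow> bool"
  assumes "simple_graph E"
  shows "card (parent_maps E r) = num_spanning_trees E"
proof -
  have "bij_betw (parent_edges r) (parent_maps E r) {T. spanning_tree E T}"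
    unfolding bij_betw_def
    using inj_on_parent_edges parent_edges_spanning_tree spanning_tree_eq_parent_edges[OF assms]
    by fastforce
  then show ?thesis unfolding num_spanning_trees_def by (rule bij_betw_same_card)
qed

theorem matrix_tree:
  fixes E :: "'n::finite \<Rightarrow> 'n \<Rightarrow> bool"
  assumes "simple_graph E"
  shows "det (laplacian E + ones_mat) = real CARD('n) ^ 2 * real (num_spanning_trees E)"
proof -
  fix r :: 'n
  have "det (laplacian E + ones_mat) = real CARD('n) * det (\<chi> i. if i = r then 1 else row i (laplacian E))"
    using det_add_ones_mat[OF sum_rows_laplacian_add_mat[OF assms, of 0], where r = r]
    by (simp only: mat_0 add_0_right add_0_left)
  then show ?thesis
    by (simp add: det_laplacian_replace_row_ones det_laplacian_replace_row_axis[OF assms]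
        card_parent_maps[OF assms] power2_eq_square)
qed

section \<open>Characteristic polynomials\<close>

lemma poly_det: "poly (det M) y = det (\<chi> i j. poly (M $ i $ j) y)"
  by (simp add: det_def poly_sum poly_prod)

lemma degree_lead_coeff_charpoly:
  fixes A :: "real^'n::finite^'n"
  shows "Polynomial.degree (charpoly A) = CARD('n)" and "lead_coeff (charpoly A) = 1"
proof -
  let ?C = "(\<chi> i j. (if i = j then [:0, 1:] else 0) - [:A $ i $ j:]) :: real poly^'n^'n"
  let ?n = "CARD('n)"
  let ?P = "{p. p permutes (UNIV::'n set)}"
  let ?t = "\<lambda>p. of_int (sign p) * (\<Prod>i\<in>UNIV. ?C $ i $ p i)"
  have t_id: "?t id = (\<Prod>i\<in>UNIV. [:- (A$i$i), 1:])" by (simp add: sign_id)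
  then have deg_id: "Polynomial.degree (?t id) = ?n" by (simp add: degree_prod_eq_sum_degree)
  have lc_id: "lead_coeff (?t id) = 1" using t_id by (simp add: lead_coeff_prod)
  have "Polynomial.degree (?t p) \<le> ?n - 1" if p: "p \<in> ?P - {id}" for p
  proof -
    from p obtain i0 where i0: "p i0 \<noteq> i0" by (auto simp: fun_eq_iff)
    have "Polynomial.degree (?t p) \<le> Polynomial.degree (\<Prod>i\<in>UNIV. ?C $ i $ p i)"
      by (simp add: of_int_poly degree_mult_le order.trans[OF degree_mult_le])
    also have "\<dots> \<le> (\<Sum>i\<in>UNIV. Polynomial.degree (?C $ i $ p i))"
      using degree_prod_sum_le[of UNIV "\<lambda>i. ?C $ i $ p i"] by (simp add: o_def)
    also have "\<dots> \<le> (\<Sum>i\<in>UNIV. if i = i0 then 0 else 1)"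
      using i0 by (intro sum_mono) auto
    also have "\<dots> = ?n - 1" by (simp add: sum.If_cases Compl_eq_Diff_UNIV card_Diff_singleton)
    finally show ?thesis .
  qed
  then have rest: "Polynomial.degree (\<Sum>p\<in>?P - {id}. ?t p) \<le> ?n - 1" by (intro degree_sum_le) auto
  have cp: "charpoly A = ?t id + (\<Sum>p\<in>?P - {id}. ?t p)"
    unfolding charpoly_def det_def by (subst sum.remove[of _ id]) (auto simp: permutes_id)
  have "0 < ?n" by simp
  then have "coeff (\<Sum>p\<in>?P - {id}. ?t p) ?n = 0" using rest by (intro coeff_eq_0) linarith
  then have "coeff (charpoly A) ?n = 1" using cp deg_id lc_id by simp
  moreover have "Polynomial.degree (charpoly A) \<le> ?n"
    using cp rest deg_id degree_add_le_max[of "?t id" "\<Sum>p\<in>?P - {id}. ?t p"] by simp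
  ultimately show "Polynomial.degree (charpoly A) = ?n" by (metis le_antisym le_degree one_neq_zero)
  then show "lead_coeff (charpoly A) = 1" using \<open>coeff (charpoly A) ?n = 1\<close> by simp
qed

lemma degree_lead_coeff_prod_linear_factors:
  "Polynomial.degree (\<Prod>x\<in>#M. [:- x, 1:] :: 'a::idom poly) = size M \<and> lead_coeff (\<Prod>x\<in>#M. [:- x, 1:] :: 'a poly) = 1"
proof (induction M)
  case (add a M)
  let ?Q = "\<Prod>x\<in>#M. [:- x, 1:] :: 'a poly"
  from add.IH have deg: "Polynomial.degree ?Q = size M" and lc: "lead_coeff ?Q = 1" by auto
  then have "?Q \<noteq> 0" by auto
  then have "Polynomial.degree ([:- a, 1:] * ?Q) = size M + 1"
    using deg by (subst degree_mult_eq) auto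
  moreover have "lead_coeff ([:- a, 1:] * ?Q) = 1" unfolding lead_coeff_mult lc by simp
  ultimately show ?case by simp
qed simp

lemma prod_proots_dvd:
  fixes p :: "'a::idom poly"
  assumes "p \<noteq> 0"
  shows "(\<Prod>x\<in>#proots p. [:- x, 1:]) dvd p"
  using assms
proof (induction "Polynomial.degree p" arbitrary: p rule: less_induct)
  case (less p)
  show ?case
  proof (cases "proots p = {#}")
    case False
    then obtain a where "a \<in># proots p" by fastforce
    then have "poly p a = 0" using less.prems by simp
    then obtain p' where p': "p = [:- a, 1:] * p'" by (auto simp: poly_eq_0_iff_dvd elim: dvdE)
    have "p' \<noteq> 0" using p' less.prems by auto
    then have "Polynomial.degree p = 1 + Polynomial.degree p'" using p' by (simp add: degree_mult_eq del: mult_pCons_left)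
    then have "(\<Prod>x\<in>#proots p'. [:- x, 1:]) dvd p'" using less.hyps \<open>p' \<noteq> 0\<close> by simp
    moreover have "proots p = add_mset a (proots p')"
      using p' \<open>p' \<noteq> 0\<close> by (simp add: proots_mult del: mult_pCons_left)
    ultimately show ?thesis using p' by (simp del: mult_pCons_left)
  qed simp
qed

lemma monic_poly_eq_prod_proots:
  fixes p :: "'a::idom poly"
  assumes "size (proots p) = Polynomial.degree p" "lead_coeff p = 1"
  shows "p = (\<Prod>x\<in>#proots p. [:- x, 1:])"
proof -
  let ?Q = "(\<Prod>x\<in>#proots p. [:- x, 1:]) :: 'a poly"
  have "p \<noteq> 0" using assms(2) by auto
  then obtain q where q: "p = ?Q * q" using prod_proots_dvd by blast
  have Q: "Polynomial.degree ?Q = Polynomial.degree p" "lead_coeff ?Q = 1"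
    using degree_lead_coeff_prod_linear_factors[of "proots p"] assms(1) by auto
  then have "?Q \<noteq> 0" "q \<noteq> 0" using q \<open>p \<noteq> 0\<close> by auto
  then have "Polynomial.degree q = 0" using q Q(1) by (metis add_cancel_right_right degree_mult_eq)
  moreover have "lead_coeff p = lead_coeff ?Q * lead_coeff q" using q by (metis lead_coeff_mult)
  then have "lead_coeff q = 1" using Q(2) assms(2) by simp
  ultimately have "q = 1" by (metis degree_0_id one_pCons)
  then show ?thesis using q by simp
qed

lemma prod_mset_sum: "(\<Prod>x\<in>#(\<Sum>i\<in>I. M i). f x) = (\<Prod>i\<in>I. \<Prod>x\<in>#M i. f x)"
  by (induction I rule: infinite_finite_induct) auto

lemma size_sum_mset: "size (\<Sum>i\<in>I. M i :: 'a multiset) = (\<Sum>i\<in>I. size (M i))"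
  by (induction I rule: infinite_finite_induct) auto

lemma charpoly_eq_symmetric_spectrum:
  fixes A :: "real^'n::finite^'n"
  assumes "proots (charpoly A) = (\<Sum>i\<in>{1..k}. {#lam i, - lam i#}) + replicate_mset (CARD('n) - 2 * k) 0"
  shows "2 * k \<le> CARD('n)"
    and "charpoly A = (\<Prod>i\<in>{1..k}. [:- lam i, 1:] * [:lam i, 1:]) * [:0, 1:] ^ (CARD('n) - 2 * k)"
proof -
  have size: "size (proots (charpoly A)) = 2 * k + (CARD('n) - 2 * k)"
    unfolding assms by (simp add: size_sum_mset)
  then show k: "2 * k \<le> CARD('n)"
    using size_proots_le[of "charpoly A"] degree_lead_coeff_charpoly(1)[of A] by linarith
  then have "size (proots (charpoly A)) = Polynomial.degree (charpoly A)"
    using size degree_lead_coeff_charpoly(1)[of A] by simp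
  then have "charpoly A = (\<Prod>x\<in>#proots (charpoly A). [:- x, 1:])"
    using degree_lead_coeff_charpoly(2) by (rule monic_poly_eq_prod_proots)
  also have "\<dots> = (\<Prod>i\<in>{1..k}. [:- lam i, 1:] * [:lam i, 1:]) * [:0, 1:] ^ (CARD('n) - 2 * k)"
    unfolding assms by (simp add: prod_mset_sum del: mult_pCons_left)
  finally show "charpoly A = (\<Prod>i\<in>{1..k}. [:- lam i, 1:] * [:lam i, 1:]) * [:0, 1:] ^ (CARD('n) - 2 * k)" .
qed

section \<open>Bipartite graphs\<close>

definition diag_mat :: "('n::finite \<Rightarrow> 'a::zero) \<Rightarrow> 'a^'n^'n" where
  "diag_mat d = (\<chi> i j. if i = j then d i else 0)"

lemma det_diag_mat: "det (diag_mat d) = (\<Prod>i\<in>UNIV. d i)"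
  by (subst det_diagonal) (auto simp: diag_mat_def)

lemma diag_mat_mult_nth: "(diag_mat d ** M) $ i $ j = d i * M $ i $ j"
proof -
  have "diag_mat d $ i $ k * M $ k $ j = (if k = i then d i * M $ i $ j else 0)" for k
    by (simp add: diag_mat_def)
  then show ?thesis by (simp add: matrix_matrix_mult_def)
qed

lemma mult_diag_mat_nth: "(M ** diag_mat d) $ i $ j = M $ i $ j * d j"
proof -
  have "M $ i $ k * diag_mat d $ k $ j = (if k = j then M $ i $ j * d j else 0)" for k
    by (simp add: diag_mat_def)
  then show ?thesis by (simp add: matrix_matrix_mult_def)
qed

lemma det_scale_entries:
  fixes M :: "'a::comm_ring_1^'n::finite^'n"
  shows "det (\<chi> i j. s * M $ i $ j) = s ^ CARD('n) * det M"
proof -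
  have "(\<chi> i j. s * M $ i $ j) = (\<chi> i. s *s M $ i)" by (simp add: vec_eq_iff)
  then show ?thesis by (simp add: det_rows_mul)
qed

definition diag_minus_adj :: "('a::finite \<Rightarrow> 'a \<Rightarrow> bool) \<Rightarrow> 'a set \<Rightarrow> 'r \<Rightarrow> 'r \<Rightarrow> 'r::comm_ring_1^'a^'a" where
  "diag_minus_adj E V \<alpha> \<beta> = (\<chi> i j. (if i = j then if i \<in> V then \<alpha> else \<beta> else 0) - (if E i j then 1 else 0))"

lemma charpoly_adjacency_eq: "charpoly (adjacency E) = det (diag_minus_adj E V [:0, 1:] [:0, 1:])"
  unfolding charpoly_def diag_minus_adj_def adjacency_def
  by (rule arg_cong[where f = det]) (auto simp: vec_eq_iff one_pCons)

lemma diag_mat_rescale_diag_minus_adj: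
  fixes a b c d s \<alpha> \<beta> \<alpha>' \<beta>' :: "'r::comm_ring_1"
  assumes cross: "\<And>i j. E i j \<Longrightarrow> i \<in> V \<longleftrightarrow> j \<notin> V"
    and "a * d = s" "b * c = s" "a * c * \<alpha> = s * \<alpha>'" "b * d * \<beta> = s * \<beta>'"
  shows "diag_mat (\<lambda>i. if i \<in> V then a else b) ** diag_minus_adj E V \<alpha> \<beta> **
      diag_mat (\<lambda>i. if i \<in> V then c else d) = (\<chi> i j. s * diag_minus_adj E V \<alpha>' \<beta>' $ i $ j)"
proof -
  have "a * \<alpha> * c = s * \<alpha>'" "b * \<beta> * d = s * \<beta>'" "a * d = s" "b * c = s"
    using assms(2-5) by (simp_all add: ac_simps)
  moreover have "\<not> E i i" for i using cross by blast
  ultimately show ?thesis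
    using cross by (auto simp: vec_eq_iff diag_mat_mult_nth mult_diag_mat_nth diag_minus_adj_def)
qed

text \<open>Conjugating by \<open>diag(1 on V, x off V)\<close> turns \<open>diag(x\<^sup>2 on V, 1 off V) - A\<close> into
  \<open>x (x I - A)\<close>.\<close>

lemma det_diag_minus_adj_square:
  fixes E :: "'a::finite \<Rightarrow> 'a \<Rightarrow> bool"
  assumes cross: "\<And>i j. E i j \<Longrightarrow> i \<in> V \<longleftrightarrow> j \<notin> V"
  shows "[:0, 1:] ^ card (- V) * det (diag_minus_adj E V ([:0, 1:] ^ 2) 1) * [:0, 1:] ^ card (- V) =
    [:0, 1:] ^ CARD('a) * charpoly (adjacency E)"
proof -
  let ?x = "[:0, 1:] :: real poly"
  let ?D = "diag_mat (\<lambda>i. if i \<in> V then 1 else ?x)"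
  have det_D: "det ?D = ?x ^ card (- V)"
    by (simp add: det_diag_mat prod.If_cases Compl_eq_Diff_UNIV)
  have "?D ** diag_minus_adj E V (?x ^ 2) 1 ** ?D = (\<chi> i j. ?x * diag_minus_adj E V ?x ?x $ i $ j)"
    using cross by (intro diag_mat_rescale_diag_minus_adj) (simp_all add: power2_eq_square)
  then have "det ?D * det (diag_minus_adj E V (?x ^ 2) 1) * det ?D = ?x ^ CARD('a) * det (diag_minus_adj E V ?x ?x)"
    by (metis det_mul det_scale_entries)
  then show ?thesis by (simp add: det_D charpoly_adjacency_eq[of E V])
qed

lemma det_diag_minus_adj_square_eq:
  fixes E :: "'a::finite \<Rightarrow> 'a \<Rightarrow> bool" and Q :: "real poly"
  assumes cross: "\<And>i j. E i j \<Longrightarrow> i \<in> V \<longleftrightarrow> j \<notin> V"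
    and cp: "charpoly (adjacency E) = Q * [:0, 1:] ^ (CARD('a) - 2 * k)" and k: "2 * k \<le> CARD('a)"
    and V: "card V \<le> card (- V)" and Q0: "poly Q 0 \<noteq> 0"
  shows "k \<le> card V" and "det (diag_minus_adj E V ([:0, 1:] ^ 2) 1) = [:0, 1:] ^ (2 * (card V - k)) * Q"
proof -
  let ?x = "[:0, 1:] :: real poly"
  let ?G = "det (diag_minus_adj E V (?x ^ 2) 1)"
  define m where "m = card V"
  define d where "d = card (- V) - card V"
  define e where "e = CARD('a) - 2 * k"
  have card: "CARD('a) = m + (m + d)"
    using V card_Un_disjoint[of V "- V"] by (simp add: m_def d_def)
  have card_compl: "card (- V) = m + d" using V by (simp add: m_def d_def)
  have cp': "charpoly (adjacency E) = Q * ?x ^ e" by (simp add: cp e_def)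
  have "?x ^ card (- V) * ?G * ?x ^ card (- V) = ?x ^ CARD('a) * charpoly (adjacency E)"
    by (rule det_diag_minus_adj_square) (rule cross)
  then have "?x ^ (m + d) * (?x ^ m * (?G * ?x ^ d)) = ?x ^ (m + d) * (?x ^ m * (?x ^ e * Q))"
    unfolding card_compl card cp' by (simp add: power_add algebra_simps)
  then have eq: "?G * ?x ^ d = ?x ^ e * Q" by simp
  have x0: "?x ^ n \<noteq> 0" for n by simp
  have "d \<le> e"
  proof (rule ccontr)
    assume "\<not> d \<le> e"
    then obtain t where "d = e + Suc t" by (metis add_Suc_right less_imp_Suc_add not_le)
    then have "?x ^ e * (?G * ?x ^ Suc t) = ?x ^ e * Q" using eq by (simp add: power_add algebra_simps)
    then have "?G * ?x ^ Suc t = Q" by (rule mult_left_cancel[OF x0, THEN iffD1])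
    then have "poly Q 0 = 0" by (metis mult_zero_right poly_0 poly_mult poly_pCons poly_power power_Suc mult_zero_left add_0)
    then show False using Q0 by simp
  qed
  then show k_le: "k \<le> card V" using k card unfolding e_def m_def by linarith
  then have "e = d + 2 * (m - k)" using card unfolding e_def m_def by simp
  then have "?x ^ d * ?G = ?x ^ d * (?x ^ (2 * (m - k)) * Q)" using eq by (simp add: power_add algebra_simps)
  then show "?G = ?x ^ (2 * (card V - k)) * Q" by (simp add: m_def)
qed

lemma det_diag_minus_adj_one:
  fixes E :: "'a::finite \<Rightarrow> 'a \<Rightarrow> bool" and lam :: "nat \<Rightarrow> real"
  assumes cross: "\<And>i j. E i j \<Longrightarrow> i \<in> V \<longleftrightarrow> j \<notin> V"
    and cp: "charpoly (adjacency E) =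
      (\<Prod>i\<in>{1..k}. [:- lam i, 1:] * [:lam i, 1:]) * [:0, 1:] ^ (CARD('a) - 2 * k)"
    and k: "2 * k \<le> CARD('a)" and V: "card V \<le> card (- V)"
    and nz: "\<forall>i\<in>{1..k}. lam i \<noteq> 0" and w: "w \<ge> 0"
  shows "k \<le> card V" and "det (diag_minus_adj E V w 1) = w ^ (card V - k) * (\<Prod>i\<in>{1..k}. w - (lam i)\<^sup>2)"
proof -
  let ?Q = "\<Prod>i\<in>{1..k}. [:- lam i, 1:] * [:lam i, 1:]"
  have "poly ?Q 0 \<noteq> 0" using nz by (simp add: poly_prod)
  note square = det_diag_minus_adj_square_eq[OF cross cp k V this]
  show "k \<le> card V" by (rule square(1))
  define y where "y = sqrt w"
  have w_eq: "w = y\<^sup>2" using w by (simp add: y_def)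
  have "(\<chi> i j. poly (diag_minus_adj E V ([:0, 1:] ^ 2) 1 $ i $ j) y) = diag_minus_adj E V w 1"
    by (simp add: vec_eq_iff diag_minus_adj_def w_eq)
  then have "det (diag_minus_adj E V w 1) = poly (det (diag_minus_adj E V ([:0, 1:] ^ 2) 1)) y"
    by (simp add: poly_det)
  also have "\<dots> = (y\<^sup>2) ^ (card V - k) * (\<Prod>i\<in>{1..k}. y\<^sup>2 - (lam i)\<^sup>2)"
    using square(2) by (simp add: poly_prod power_mult power2_eq_square del: mult_pCons_left)
  finally show "det (diag_minus_adj E V w 1) = w ^ (card V - k) * (\<Prod>i\<in>{1..k}. w - (lam i)\<^sup>2)"
    by (simp add: w_eq)
qed

text \<open>Rescaling by \<open>diag(\<beta> on V, 1 off V)\<close> and \<open>diag(1 on V, 1/\<beta> off V)\<close> reduces to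
  \<open>\<beta> = 1\<close>.\<close>

lemma det_diag_minus_adj:
  fixes E :: "'a::finite \<Rightarrow> 'a \<Rightarrow> bool" and lam :: "nat \<Rightarrow> real"
  assumes cross: "\<And>i j. E i j \<Longrightarrow> i \<in> V \<longleftrightarrow> j \<notin> V"
    and cp: "charpoly (adjacency E) =
      (\<Prod>i\<in>{1..k}. [:- lam i, 1:] * [:lam i, 1:]) * [:0, 1:] ^ (CARD('a) - 2 * k)"
    and k: "2 * k \<le> CARD('a)" and V: "card V \<le> card (- V)"
    and nz: "\<forall>i\<in>{1..k}. lam i \<noteq> 0" and \<alpha>: "\<alpha> > 0" and \<beta>: "\<beta> > 0"
  shows "det (diag_minus_adj E V \<alpha> \<beta>) =
    \<alpha> ^ (card V - k) * \<beta> ^ (card (- V) - k) * (\<Prod>i\<in>{1..k}. \<alpha> * \<beta> - (lam i)\<^sup>2)"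
proof -
  let ?P = "\<Prod>i\<in>{1..k}. \<alpha> * \<beta> - (lam i)\<^sup>2"
  let ?L = "diag_mat (\<lambda>i. if i \<in> V then \<beta> else 1)"
  let ?R = "diag_mat (\<lambda>i. if i \<in> V then 1 else 1 / \<beta>)"
  note one = det_diag_minus_adj_one[OF cross cp k V nz, of "\<alpha> * \<beta>"]
  obtain m where m: "card V = k + m" using one(1) \<alpha> \<beta> by (auto dest: le_Suc_ex)
  obtain d where d: "card (- V) = card V + d" using V by (auto dest: le_Suc_ex)
  have det_L: "det ?L = \<beta> ^ card V" by (simp add: det_diag_mat prod.If_cases Int_def)
  have det_R: "det ?R = (1 / \<beta>) ^ card (- V)"
    by (simp add: det_diag_mat prod.If_cases Compl_eq_Diff_UNIV)
  have "?L ** diag_minus_adj E V \<alpha> \<beta> ** ?R = (\<chi> i j. 1 * diag_minus_adj E V (\<alpha> * \<beta>) 1 $ i $ j)"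
    using cross \<beta> by (intro diag_mat_rescale_diag_minus_adj) simp_all
  then have "det ?L * det (diag_minus_adj E V \<alpha> \<beta>) * det ?R = det (diag_minus_adj E V (\<alpha> * \<beta>) 1)"
    by (simp add: det_mul[symmetric])
  also have "\<dots> = (\<alpha> * \<beta>) ^ m * ?P" using one(2) \<alpha> \<beta> m by simp
  finally have "\<beta> ^ card V * det (diag_minus_adj E V \<alpha> \<beta>) * (1 / \<beta>) ^ card (- V) = (\<alpha> * \<beta>) ^ m * ?P"
    unfolding det_L det_R .
  then have "det (diag_minus_adj E V \<alpha> \<beta>) = \<beta> ^ d * ((\<alpha> * \<beta>) ^ m * ?P)"
    using \<beta> unfolding d by (simp add: power_add field_simps)
  then show ?thesis using m d by (simp add: power_add power_mult_distrib algebra_simps)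
qed

lemma semiregular_bipartiteD:
  assumes "semiregular_bipartite E V1 V2 q1 q2"
  shows "simple_graph E" and "V2 = - V1" and "\<And>i j. E i j \<Longrightarrow> i \<in> V1 \<longleftrightarrow> j \<notin> V1"
    and "\<And>i. i \<in> V1 \<Longrightarrow> degree E i = q1" and "\<And>i. i \<notin> V1 \<Longrightarrow> degree E i = q2"
  using assms unfolding semiregular_bipartite_def by blast+

lemma card_add_card_semiregular_bipartite:
  fixes E :: "'a::finite \<Rightarrow> 'a \<Rightarrow> bool"
  assumes "semiregular_bipartite E V1 V2 q1 q2"
  shows "card V1 + card V2 = CARD('a)"
  using semiregular_bipartiteD(2)[OF assms] card_Un_disjoint[of V1 "- V1"] by simp

lemma det_laplacian_add_mat_ones_semiregular:
  fixes E :: "'a::finite \<Rightarrow> 'a \<Rightarrow> bool" and lam :: "nat \<Rightarrow> real" and c :: real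
  assumes G: "semiregular_bipartite E V1 V2 q1 q2"
    and spec: "spec E = (\<Sum>i\<in>{1..k}. {#lam i, - lam i#}) + replicate_mset (CARD('a) - 2 * k) 0"
    and V: "card V1 \<le> card V2" and pos: "\<forall>i\<in>{1..k}. lam i > 0"
    and k1: "1 \<le> k" and lam1: "lam 1 = sqrt (real (q1 * q2))" and c: "c > 0"
  shows "det (laplacian E + mat c + ones_mat) = (real CARD('a) + c) *
    ((q1 + q2 + c) * (q1 + c) ^ (card V1 - k) * (q2 + c) ^ (card V2 - k) *
     (\<Prod>i\<in>{2..k}. (q1 + c) * (q2 + c) - (lam i)\<^sup>2))"
proof -
  note D = semiregular_bipartiteD[OF G]
  note cp = charpoly_eq_symmetric_spectrum[OF spec[unfolded spec_def]]
  let ?f = "\<lambda>i. (q1 + c) * (q2 + c) - (lam i)\<^sup>2"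
  have K: "laplacian E + mat c = diag_minus_adj E V1 (q1 + c) (q2 + c)"
    using D by (auto simp: vec_eq_iff laplacian_def mat_def diag_minus_adj_def)
  have "det (laplacian E + mat c) = (q1 + c) ^ (card V1 - k) * (q2 + c) ^ (card V2 - k) * prod ?f {1..k}"
    unfolding K D(2) by (rule det_diag_minus_adj[OF D(3) cp(2) cp(1)]) (use V D(2) pos c in auto)
  also have "prod ?f {1..k} = ?f 1 * prod ?f {2..k}"
    using k1 by (simp add: prod.atLeast_Suc_atMost numeral_2_eq_2)
  also have "?f 1 = c * (q1 + q2 + c)"
    using lam1 by (simp add: algebra_simps)
  finally have "c * det (laplacian E + mat c + ones_mat) = c * ((real CARD('a) + c) *
      ((q1 + q2 + c) * (q1 + c) ^ (card V1 - k) * (q2 + c) ^ (card V2 - k) * prod ?f {2..k}))"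
    using det_add_ones_mat_scaled[OF sum_rows_laplacian_add_mat[OF D(1)]] by (simp add: algebra_simps)
  then show ?thesis using c by simp
qed

section \<open>Joins\<close>

lemma swapidseq_map_sum:
  assumes "swapidseq n p"
  shows "swapidseq n (map_sum p (id :: 'b \<Rightarrow> 'b))" and "swapidseq n (map_sum (id :: 'b \<Rightarrow> 'b) p)"
  using assms
proof (induction rule: swapidseq.induct)
  case id
  case 1 show ?case by (metis map_sum.id swapidseq.id)
  case 2 show ?case by (metis map_sum.id swapidseq.id)
next
  case (comp_Suc n p a b)
  have left: "map_sum (Transposition.transpose a b \<circ> p) id =
      Transposition.transpose (Inl a) (Inl b) \<circ> map_sum p (id :: 'b \<Rightarrow> 'b)" (is "?l = ?r")
  proof
    fix x show "?l x = ?r x" by (cases x) (auto simp: Transposition.transpose_def)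
  qed
  have right: "map_sum id (Transposition.transpose a b \<circ> p) =
      Transposition.transpose (Inr a) (Inr b) \<circ> map_sum (id :: 'b \<Rightarrow> 'b) p" (is "?l = ?r")
  proof
    fix x show "?l x = ?r x" by (cases x) (auto simp: Transposition.transpose_def)
  qed
  show "swapidseq (Suc n) (map_sum (Transposition.transpose a b \<circ> p) (id :: 'b \<Rightarrow> 'b))"
    unfolding left by (rule swapidseq.comp_Suc[OF comp_Suc.IH(1)]) (use comp_Suc.hyps(2) in simp)
  show "swapidseq (Suc n) (map_sum (id :: 'b \<Rightarrow> 'b) (Transposition.transpose a b \<circ> p))"
    unfolding right by (rule swapidseq.comp_Suc[OF comp_Suc.IH(2)]) (use comp_Suc.hyps(2) in simp)
qed

lemma sign_map_sum:
  fixes p :: "'a \<Rightarrow> 'a" and q :: "'b \<Rightarrow> 'b"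
  assumes "permutation p" "permutation q"
  shows "sign (map_sum p q) = sign p * sign q"
proof -
  let ?p = "map_sum p (id :: 'b \<Rightarrow> 'b)" and ?q = "map_sum (id :: 'a \<Rightarrow> 'a) q"
  obtain n m where n: "swapidseq n p" and m: "swapidseq m q"
    using assms by (auto simp: permutation_def)
  have "evenperm ?p = evenperm p"
    using evenperm_unique[OF swapidseq_map_sum(1)[OF n] refl] evenperm_unique[OF n refl] by simp
  moreover have "evenperm ?q = evenperm q"
    using evenperm_unique[OF swapidseq_map_sum(2)[OF m] refl] evenperm_unique[OF m refl] by simp
  moreover have "sign (map_sum p q) = sign (?p \<circ> ?q)" by (simp add: map_sum.comp)
  moreover have "sign (?p \<circ> ?q) = sign ?p * sign ?q"
    using swapidseq_map_sum(1)[OF n] swapidseq_map_sum(2)[OF m]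
    by (intro sign_compose) (auto simp: permutation_def)
  ultimately show ?thesis by (simp add: sign_def)
qed

definition block_diag :: "'a^'m::finite^'m \<Rightarrow> 'a^'n::finite^'n \<Rightarrow> 'a::zero^('m + 'n)^('m + 'n)" where
  "block_diag X Y = (\<chi> i j. case (i, j) of (Inl a, Inl b) \<Rightarrow> X $ a $ b | (Inr a, Inr b) \<Rightarrow> Y $ a $ b | _ \<Rightarrow> 0)"

lemma permutes_UNIV_iff_bij: "p permutes UNIV \<longleftrightarrow> bij p"
  using bij_imp_permutes[of p UNIV] permutes_imp_bij[of p UNIV] by auto

lemma bij_map_sum: "bij p \<Longrightarrow> bij q \<Longrightarrow> bij (map_sum p q)"
  by (intro o_bij[of "map_sum (inv p) (inv q)"])
    (simp_all add: map_sum.comp bij_is_inj inv_o_cancel surj_iff[THEN iffD1] bij_is_surj map_sum.id)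

lemma inj_map_sum_pair: "inj (\<lambda>(p, q). map_sum p q)"
proof (rule injI, clarsimp)
  fix p q p' q' assume "map_sum p q = map_sum p' q'"
  then have "map_sum p q (Inl a) = map_sum p' q' (Inl a)" "map_sum p q (Inr b) = map_sum p' q' (Inr b)"
    for a b by auto
  then show "p = p' \<and> q = q'" by (auto simp: fun_eq_iff)
qed

lemma bij_preserving_summands_eq_map_sum:
  fixes p :: "'a::finite + 'b::finite \<Rightarrow> 'a + 'b"
  assumes "bij p" and "\<And>a. p (Inl a) \<in> range Inl" and "\<And>b. p (Inr b) \<in> range Inr"
  obtains p1 p2 where "bij p1" "bij p2" "p = map_sum p1 p2"
proof
  define p1 where "p1 a = projl (p (Inl a))" for a
  define p2 where "p2 b = projr (p (Inr b))" for b
  have p1: "p (Inl a) = Inl (p1 a)" for a using assms(2)[of a] by (auto simp: p1_def)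
  have p2: "p (Inr b) = Inr (p2 b)" for b using assms(3)[of b] by (auto simp: p2_def)
  show "p = map_sum p1 p2"
  proof
    fix x show "p x = map_sum p1 p2 x" by (cases x) (simp_all add: p1 p2)
  qed
  have "inj p1" "inj p2" using bij_is_inj[OF assms(1)] p1 p2 by (metis injD injI sum.inject)+
  then show "bij p1" "bij p2" by (simp_all add: bij_def finite_UNIV_inj_surj)
qed

text \<open>Only the permutations preserving both blocks contribute to the Leibniz expansion.\<close>

lemma det_block_diag:
  fixes X :: "'a::comm_ring_1^'m::finite^'m" and Y :: "'a^'n::finite^'n"
  shows "det (block_diag X Y) = det X * det Y"
proof -
  let ?B = "block_diag X Y"
  let ?P = "{p. p permutes (UNIV :: ('m + 'n) set)}"
  let ?P1 = "{p. p permutes (UNIV :: 'm set)}"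
  let ?P2 = "{p. p permutes (UNIV :: 'n set)}"
  let ?t = "\<lambda>p. of_int (sign p) * (\<Prod>i\<in>UNIV. ?B $ i $ p i) :: 'a"
  let ?h = "\<lambda>(p1, p2). map_sum p1 p2 :: 'm + 'n \<Rightarrow> 'm + 'n"
  have sub: "?h ` (?P1 \<times> ?P2) \<subseteq> ?P" by (auto simp: permutes_UNIV_iff_bij bij_map_sum)
  have "?t p = 0" if p: "p \<in> ?P - ?h ` (?P1 \<times> ?P2)" for p
  proof (rule ccontr)
    assume "?t p \<noteq> 0"
    then have nz: "?B $ i $ p i \<noteq> 0" for i by (metis finite UNIV_I mult_zero_right prod_zero)
    have "bij p" using p by (simp add: permutes_UNIV_iff_bij)
    moreover have "p (Inl a) \<in> range Inl" for a
      using nz[of "Inl a"] by (cases "p (Inl a)") (simp_all add: block_diag_def)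
    moreover have "p (Inr b) \<in> range Inr" for b
      using nz[of "Inr b"] by (cases "p (Inr b)") (simp_all add: block_diag_def)
    ultimately obtain p1 p2 where "bij p1" "bij p2" "p = map_sum p1 p2"
      by (rule bij_preserving_summands_eq_map_sum)
    then show False using p by (auto simp: permutes_UNIV_iff_bij)
  qed
  then have "det ?B = (\<Sum>p\<in>?h ` (?P1 \<times> ?P2). ?t p)"
    unfolding det_def using sub by (intro sum.mono_neutral_right) auto
  also have "\<dots> = (\<Sum>pq\<in>?P1 \<times> ?P2. ?t (?h pq))"
    by (rule sum.reindex[unfolded o_def]) (rule inj_on_subset[OF inj_map_sum_pair], simp)
  also have "\<dots> = (\<Sum>(p1, p2)\<in>?P1 \<times> ?P2. (of_int (sign p1) * (\<Prod>a\<in>UNIV. X $ a $ p1 a)) *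
      (of_int (sign p2) * (\<Prod>b\<in>UNIV. Y $ b $ p2 b)))"
  proof (rule sum.cong[OF refl], clarsimp)
    fix p1 p2 assume "p1 permutes (UNIV :: 'm set)" "p2 permutes (UNIV :: 'n set)"
    then have "sign (map_sum p1 p2) = sign p1 * sign p2"
      by (intro sign_map_sum) (auto simp: permutation_permutes)
    moreover have "(\<Prod>i\<in>UNIV. ?B $ i $ map_sum p1 p2 i) = (\<Prod>a\<in>UNIV. X $ a $ p1 a) * (\<Prod>b\<in>UNIV. Y $ b $ p2 b)"
      by (simp add: UNIV_Plus_UNIV[symmetric] prod.Plus block_diag_def del: UNIV_Plus_UNIV)
    ultimately show "of_int (sign (map_sum p1 p2)) * (\<Prod>i\<in>UNIV. ?B $ i $ map_sum p1 p2 i) =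
        of_int (sign p1) * (\<Prod>a\<in>UNIV. X $ a $ p1 a) * (of_int (sign p2) * (\<Prod>b\<in>UNIV. Y $ b $ p2 b))"
      by (simp add: ac_simps)
  qed
  also have "\<dots> = det X * det Y"
    by (simp add: det_def sum_product sum.cartesian_product)
  finally show ?thesis .
qed

lemma simple_graph_join: "simple_graph E1 \<Longrightarrow> simple_graph E2 \<Longrightarrow> simple_graph (join E1 E2)"
  unfolding simple_graph_def join_def by (auto split: sum.splits)

lemma degree_join_Inl:
  fixes E1 :: "'a::finite \<Rightarrow> 'a \<Rightarrow> bool" and E2 :: "'b::finite \<Rightarrow> 'b \<Rightarrow> bool"
  shows "degree (join E1 E2) (Inl a) = degree E1 a + CARD('b)"
proof -
  have "{u. join E1 E2 (Inl a) u} = {x. E1 a x} <+> (UNIV :: 'b set)"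
  proof (rule set_eqI)
    fix u show "u \<in> {u. join E1 E2 (Inl a) u} \<longleftrightarrow> u \<in> {x. E1 a x} <+> (UNIV :: 'b set)"
      by (cases u) (auto simp: join_def)
  qed
  then show ?thesis by (simp add: degree_def card_Plus)
qed

lemma degree_join_Inr:
  fixes E1 :: "'a::finite \<Rightarrow> 'a \<Rightarrow> bool" and E2 :: "'b::finite \<Rightarrow> 'b \<Rightarrow> bool"
  shows "degree (join E1 E2) (Inr b) = degree E2 b + CARD('a)"
proof -
  have "{u. join E1 E2 (Inr b) u} = (UNIV :: 'a set) <+> {x. E2 b x}"
  proof (rule set_eqI)
    fix u show "u \<in> {u. join E1 E2 (Inr b) u} \<longleftrightarrow> u \<in> (UNIV :: 'a set) <+> {x. E2 b x}"
      by (cases u) (auto simp: join_def)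
  qed
  then show ?thesis by (simp add: degree_def card_Plus)
qed

lemma laplacian_join_add_ones_mat:
  fixes E1 :: "'a::finite \<Rightarrow> 'a \<Rightarrow> bool" and E2 :: "'b::finite \<Rightarrow> 'b \<Rightarrow> bool"
  shows "laplacian (join E1 E2) + ones_mat = block_diag
    (laplacian E1 + mat (real CARD('b)) + ones_mat) (laplacian E2 + mat (real CARD('a)) + ones_mat)"
  by (auto simp: vec_eq_iff laplacian_def ones_mat_def block_diag_def mat_def join_def
      degree_join_Inl degree_join_Inr split: sum.split)

theorem num_spanning_trees_join:
  fixes E1 :: "'a::finite \<Rightarrow> 'a \<Rightarrow> bool" and E2 :: "'b::finite \<Rightarrow> 'b \<Rightarrow> bool"
  assumes "simple_graph E1" "simple_graph E2"
  shows "(real CARD('a) + real CARD('b)) ^ 2 * real (num_spanning_trees (join E1 E2)) =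
    det (laplacian E1 + mat (real CARD('b)) + ones_mat) * det (laplacian E2 + mat (real CARD('a)) + ones_mat)"
proof -
  have "CARD('a + 'b) = CARD('a) + CARD('b)" by (metis UNIV_Plus_UNIV card_Plus finite)
  then show ?thesis using matrix_tree[OF simple_graph_join[OF assms]]
    by (simp add: laplacian_join_add_ones_mat det_block_diag)
qed

theorem theorem4p1:
  fixes E1 :: "'a::finite \<Rightarrow> 'a \<Rightarrow> bool" and E2 :: "'b::finite \<Rightarrow> 'b \<Rightarrow> bool"
    and V1 V2 :: "'a set" and V3 V4 :: "'b set"
    and q1 q2 q3 q4 n1 n2 n3 n4 nu1 nu2 k1 k2 :: nat
    and lam mu :: "nat \<Rightarrow> real"
  assumes G1: "semiregular_bipartite E1 V1 V2 q1 q2"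
    and G2: "semiregular_bipartite E2 V3 V4 q3 q4"
    and n1: "n1 = card V1" and n2: "n2 = card V2" and n12: "n1 \<le> n2"
    and n3: "n3 = card V3" and n4: "n4 = card V4" and n34: "n3 \<le> n4"
    and hnu1: "nu1 = n1 + n2" and hnu2: "nu2 = n3 + n4"
    and spec1: "spec E1 = (\<Sum>i\<in>{1..k1}. {#lam i, - lam i#}) + replicate_mset (nu1 - 2 * k1) 0"
    and spec2: "spec E2 = (\<Sum>j\<in>{1..k2}. {#mu j, - mu j#}) + replicate_mset (nu2 - 2 * k2) 0"
    and k1: "k1 \<ge> 1" and k2: "k2 \<ge> 1"
    and lam1: "lam 1 = sqrt (real (q1 * q2))" and hmu1: "mu 1 = sqrt (real (q3 * q4))"
    and lam_mono: "\<forall>i j. 1 \<le> i \<and> i \<le> j \<and> j \<le> k1 \<longrightarrow> lam j \<le> lam i"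
    and mu_mono: "\<forall>i j. 1 \<le> i \<and> i \<le> j \<and> j \<le> k2 \<longrightarrow> mu j \<le> mu i"
    and lam_pos: "\<forall>i\<in>{1..k1}. lam i > 0"
    and mu_pos: "\<forall>j\<in>{1..k2}. mu j > 0"
  shows "real (num_spanning_trees (join E1 E2)) =
     real (q1 + q2 + nu2) * real (q3 + q4 + nu1)
     * real (q1 + nu2) ^ (n1 - k1) * real (q2 + nu2) ^ (n2 - k1)
     * real (q3 + nu1) ^ (n3 - k2) * real (q4 + nu1) ^ (n4 - k2)
     * (\<Prod>i\<in>{2..k1}. real (q1 + nu2) * real (q2 + nu2) - (lam i)\<^sup>2)
     * (\<Prod>j\<in>{2..k2}. real (q3 + nu1) * real (q4 + nu1) - (mu j)\<^sup>2)"
proof -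
  note D1 = semiregular_bipartiteD[OF G1] and D2 = semiregular_bipartiteD[OF G2]
  have CA: "CARD('a) = nu1" using card_add_card_semiregular_bipartite[OF G1] n1 n2 hnu1 by simp
  have CB: "CARD('b) = nu2" using card_add_card_semiregular_bipartite[OF G2] n3 n4 hnu2 by simp
  have "0 < nu1" "0 < nu2" unfolding CA[symmetric] CB[symmetric] by simp_all
  let ?S1 = "real (q1 + q2 + nu2) * real (q1 + nu2) ^ (n1 - k1) * real (q2 + nu2) ^ (n2 - k1)
    * (\<Prod>i\<in>{2..k1}. real (q1 + nu2) * real (q2 + nu2) - (lam i)\<^sup>2)"
  let ?S2 = "real (q3 + q4 + nu1) * real (q3 + nu1) ^ (n3 - k2) * real (q4 + nu1) ^ (n4 - k2)
    * (\<Prod>j\<in>{2..k2}. real (q3 + nu1) * real (q4 + nu1) - (mu j)\<^sup>2)"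
  have "det (laplacian E1 + mat (real CARD('b)) + ones_mat) = (real nu1 + real nu2) * ?S1"
    using det_laplacian_add_mat_ones_semiregular[OF G1 spec1[folded CA] _ lam_pos k1 lam1, where c = "real nu2"]
      n1 n2 n12 CA CB \<open>0 < nu2\<close> by simp
  moreover have "det (laplacian E2 + mat (real CARD('a)) + ones_mat) = (real nu1 + real nu2) * ?S2"
    using det_laplacian_add_mat_ones_semiregular[OF G2 spec2[folded CB] _ mu_pos k2 hmu1, where c = "real nu1"]
      n3 n4 n34 CA CB \<open>0 < nu1\<close> by (simp add: add.commute)
  ultimately have "(real nu1 + real nu2) ^ 2 * real (num_spanning_trees (join E1 E2)) =
      (real nu1 + real nu2) ^ 2 * (?S1 * ?S2)"
    using num_spanning_trees_join[OF D1(1) D2(1)] CA CB by (simp add: power2_eq_square ac_simps)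
  then show ?thesis using \<open>0 < nu1\<close> by (simp add: ac_simps)
qed

end
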